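(* For all $\theta_1,\theta_2\in\mathbb{R}$ and all choices of signs, $g^{A,\theta_1,\theta_2}=g^{A,\pm\theta_1,\pm\theta_2}$. Moreover, for every $\theta_1\in\mathbb{R}$, $g^{A,\theta_1,-\theta_1}=g^{E,\theta_1,-\theta_1}=g^{A,\theta_1}$.
   Context: For $\theta\in\mathbb{R}$ define $\varphi_\theta:\mathrm{SPD}_n\to\mathrm{Sym}_n$ by $\varphi_\theta=\frac1\theta\mathrm{pow}_\theta$ if $\theta\neq0$ and $\varphi_0=\log$, where $\mathrm{pow}_\theta=\exp\circ(\theta\log)$ is the matrix power and $\log$ the symmetric matrix logarithm; $\partial_X\varphi_\theta(\Sigma)$ is the differential at $\Sigma$ applied to $X\in\mathrm{Sym}_n\cong T_\Sigma\mathrm{SPD}_n$. Mixed-power-Euclidean: $g^{E,\theta_1,\theta_2}_\Sigma(X,Y)=\mathrm{tr}(\partial_X\varphi_{\theta_1}(\Sigma)\,\partial_Y\varphi_{\theta_2}(\Sigma))$. Mixed-power-affine: with $\theta=(\theta_1+\theta_2)/2$, $g^{A,\theta_1,\theta_2}_\Sigma(X,Y)=\mathrm{tr}(\Sigma^{-\theta}\,\partial_X\varphi_{\theta_1}(\Sigma)\,\Sigma^{-\theta}\,\partial_Y\varphi_{\theta_2}(\Sigma))$. Power-affine metric: $g^{A,\theta}=g^{A,\theta,\theta}$, i.e. $g^{A,\theta}_\Sigma(X,Y)=\mathrm{tr}(\Sigma^{-\theta}\partial_X\varphi_\theta(\Sigma)\Sigma^{-\theta}\partial_Y\varphi_\theta(\Sigma))$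 (affine-invariant for $\theta=1$, log-Euclidean for $\theta=0$). *)

theory Defs
  imports "HOL-Analysis.Analysis"
begin

definition sym_mat :: "real^'n^'n \<Rightarrow> bool" where
  "sym_mat A \<longleftrightarrow> transpose A = A"

definition spd :: "real^'n^'n \<Rightarrow> bool" where
  "spd A \<longleftrightarrow> sym_mat A \<and> (\<forall>x. x \<noteq> 0 \<longrightarrow> x \<bullet> (A *v x) > 0)"

definition diag_mat :: "('n \<Rightarrow> real) \<Rightarrow> real^'n^'n" where
  "diag_mat d = (\<chi> i j. if i = j then d i else 0)"

definition spec_fun :: "(real \<Rightarrow> real) \<Rightarrow> real^'n^'n \<Rightarrow> real^'n^'n" where
  "spec_fun f A = (THE B. \<exists>U d. orthogonal_matrix U \<and> A = U ** diag_mat d ** transpose U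
                       \<and> B = U ** diag_mat (f \<circ> d) ** transpose U)"

definition mexp :: "real^'n^'n \<Rightarrow> real^'n^'n" where
  "mexp A = spec_fun exp A"

definition mlog :: "real^'n^'n \<Rightarrow> real^'n^'n" where
  "mlog A = spec_fun ln A"

definition mpow :: "real \<Rightarrow> real^'n^'n \<Rightarrow> real^'n^'n" where
  "mpow \<theta> A = mexp (\<theta> *\<^sub>R mlog A)"

definition phi :: "real \<Rightarrow> real^'n^'n \<Rightarrow> real^'n^'n" where
  "phi \<theta> A = (if \<theta> = 0 then mlog A else (1 / \<theta>) *\<^sub>R mpow \<theta> A)"

definition dphi :: "real \<Rightarrow> real^'n^'n \<Rightarrow> real^'n^'n \<Rightarrow> real^'n^'n" where
  "dphi \<theta> S X = (THE D. ((\<lambda>t. phi \<theta> (S + t *\<^sub>R X)) has_vector_derivative D) (at 0))"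

definition gE :: "real \<Rightarrow> real \<Rightarrow> real^'n^'n \<Rightarrow> real^'n^'n \<Rightarrow> real^'n^'n \<Rightarrow> real" where
  "gE \<theta>1 \<theta>2 S X Y = trace (dphi \<theta>1 S X ** dphi \<theta>2 S Y)"

definition gA :: "real \<Rightarrow> real \<Rightarrow> real^'n^'n \<Rightarrow> real^'n^'n \<Rightarrow> real^'n^'n \<Rightarrow> real" where
  "gA \<theta>1 \<theta>2 S X Y = (let \<theta> = (\<theta>1 + \<theta>2) / 2 in
     trace (mpow (-\<theta>) S ** dphi \<theta>1 S X ** mpow (-\<theta>) S ** dphi \<theta>2 S Y))"

definition gA1 :: "real \<Rightarrow> real^'n^'n \<Rightarrow> real^'n^'n \<Rightarrow> real^'n^'n \<Rightarrow> real" where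
  "gA1 \<theta> = gA \<theta> \<theta>"

end

theory Submission
  imports Defs
begin

text \<open>Diagonalising by an orthogonal eigenbasis shows that the powers of a symmetric matrix satisfy
  \<open>\<Sigma>^a \<Sigma>^b = \<Sigma>^(a+b)\<close>, in particular \<open>\<Sigma>^\<theta> \<Sigma>^(-\<theta>) = I\<close>. Near an SPD matrix \<open>\<Sigma>\<close>
  the power \<open>\<Sigma>^\<theta>\<close> is \<open>c^\<theta>\<close> times a convergent binomial series in \<open>I - \<Sigma>/c\<close>, hence
  differentiable, and differentiating the identity along \<open>\<Sigma> + tX\<close> yields
  \<open>\<partial>\<^sub>X\<phi>\<^bsub>-\<theta>\<^esub>(\<Sigma>) = \<Sigma>^(-\<theta>) \<partial>\<^sub>X\<phi>\<^sub>\<theta>(\<Sigma>) \<Sigma>^(-\<theta>)\<close>. Substituted into \<open>g\<^sup>A\<close>, the two new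
  factors \<open>\<Sigma>^(-\<theta>\<^sub>1)\<close> merge with the weights \<open>\<Sigma>^(-(-\<theta>\<^sub>1+\<theta>\<^sub>2)/2)\<close> into
  \<open>\<Sigma>^(-(\<theta>\<^sub>1+\<theta>\<^sub>2)/2)\<close>, so flipping the sign of an exponent leaves \<open>g\<^sup>A\<close> unchanged. For
  \<open>\<theta>\<^sub>2 = -\<theta>\<^sub>1\<close> the weights are \<open>I\<close>, so \<open>g\<^sup>A = g\<^sup>E\<close>; one more use of the derivative identity
  and the cyclicity of the trace turns \<open>g\<^sup>E\<close> into the power-affine metric.\<close>

section \<open>Symmetric matrices and their spectral decomposition\<close>

lemma sym_mat_inner_commute:
  assumes "sym_mat A" shows "(A *v x) \<bullet> y = x \<bullet> (A *v (y::real^'n))"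
proof -
  have "A *v x = x v* A" using assms unfolding sym_mat_def
    by (metis vector_transpose_matrix)
  thus ?thesis by (simp add: dot_lmul_matrix)
qed

lemma sym_mat_add_scaleR:
  assumes "sym_mat S" and "sym_mat X" shows "sym_mat (S + t *\<^sub>R X)"
  using assms by (simp add: sym_mat_def transpose_def vec_eq_iff)

lemma matrix_mul_diag_mat_nth: "(M ** diag_mat d) $ i $ j = M$i$j * d j"
proof -
  have "(M ** diag_mat d) $ i $ j = (\<Sum>k\<in>UNIV. M$i$k * (if k = j then d k else 0))"
    by (simp add: matrix_matrix_mult_def diag_mat_def)
  also have "\<dots> = (\<Sum>k\<in>UNIV. if k = j then M$i$k * d k else 0)"
    by (intro sum.cong) auto
  finally show ?thesis by simp
qed

lemma diag_mat_matrix_mul_nth: "(diag_mat d ** M) $ i $ j = d i * M$i$j"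
proof -
  have "(diag_mat d ** M) $ i $ j = (\<Sum>k\<in>UNIV. (if i = k then d i else 0) * M$k$j)"
    by (simp add: matrix_matrix_mult_def diag_mat_def)
  also have "\<dots> = (\<Sum>k\<in>UNIV. if k = i then d i * M$k$j else 0)"
    by (intro sum.cong) auto
  finally show ?thesis by simp
qed

lemma linear_quadratic_nonpos_imp_zero:
  fixes p E :: real
  assumes "\<And>s. 2 * s * p + s\<^sup>2 * E \<le> 0"
  shows "p = 0"
proof -
  define C where "C = \<bar>E\<bar> + 1"
  have C: "C > 0" "2 * C + E > 0" unfolding C_def by auto
  \<comment> \<open>evaluate at \<open>s = p / C\<close> and clear denominators\<close>
  have "2 * (p/C) * p + (p/C)\<^sup>2 * E \<le> 0" by (rule assms)
  hence "(2 * (p/C) * p + (p/C)\<^sup>2 * E) * C\<^sup>2 \<le> 0" by (simp add: mult_nonpos_nonneg)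
  moreover have "(2 * (p/C) * p + (p/C)\<^sup>2 * E) * C\<^sup>2 = p\<^sup>2 * (2 * C + E)"
    using C by (simp add: field_simps power2_eq_square)
  ultimately have "p\<^sup>2 * (2 * C + E) \<le> 0" by simp
  with C have "p\<^sup>2 \<le> 0" by (simp add: mult_le_0_iff)
  thus ?thesis by simp
qed

text \<open>First variation of the Rayleigh quotient at a maximiser \<open>v\<close>.\<close>
lemma sym_mat_quadratic_form_max_orthogonal:
  fixes A :: "real^'n^'n"
  assumes A: "sym_mat A" and V: "subspace V" and v: "v \<in> V" "v \<bullet> v = 1"
    and max: "\<And>y. y \<in> V \<Longrightarrow> y \<bullet> (A *v y) \<le> (v \<bullet> (A *v v)) * norm y ^ 2"
    and w: "w \<in> V" "w \<bullet> v = 0"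
  shows "w \<bullet> (A *v v) = 0"
proof (rule linear_quadratic_nonpos_imp_zero)
  fix s :: real
  define l where "l = v \<bullet> (A *v v)"
  define p where "p = w \<bullet> (A *v v)"
  have "v + s *\<^sub>R w \<in> V" using v w V by (simp add: subspace_add subspace_scale)
  hence "(v + s *\<^sub>R w) \<bullet> (A *v (v + s *\<^sub>R w)) \<le> l * norm (v + s *\<^sub>R w) ^ 2"
    unfolding l_def by (rule max)
  moreover have "(v + s *\<^sub>R w) \<bullet> (A *v (v + s *\<^sub>R w)) = l + 2 * s * p + s\<^sup>2 * (w \<bullet> (A *v w))"
  proof -
    have "v \<bullet> (A *v w) = p" unfolding p_def using sym_mat_inner_commute[OF A, of v w]
      by (simp add: inner_commute)
    thus ?thesis unfolding l_def p_def
      by (simp add: matrix_vector_right_distrib matrix_vector_mult_scaleR inner_add_left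
          inner_add_right power2_eq_square algebra_simps)
  qed
  moreover have "norm (v + s *\<^sub>R w) ^ 2 = 1 + s\<^sup>2 * norm w ^ 2"
  proof -
    have "norm (v + s *\<^sub>R w) ^ 2 = (v + s *\<^sub>R w) \<bullet> (v + s *\<^sub>R w)"
      by (simp add: dot_square_norm)
    also have "\<dots> = v \<bullet> v + 2 * s * (w \<bullet> v) + s\<^sup>2 * (w \<bullet> w)"
      by (simp add: inner_add_left inner_add_right inner_commute power2_eq_square algebra_simps)
    finally show ?thesis using v(2) w(2) by (simp add: dot_square_norm)
  qed
  ultimately show "2 * s * (w \<bullet> (A *v v)) + s\<^sup>2 * (w \<bullet> (A *v w) - l * norm w ^ 2) \<le> 0"
    unfolding p_def by (simp add: algebra_simps)
qed

lemma sym_mat_invariant_subspace_eigenvector: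
  fixes A :: "real^'n^'n"
  assumes A: "sym_mat A" and V: "subspace V" and inv: "\<forall>x\<in>V. A *v x \<in> V"
    and nz: "\<exists>x\<in>V. x \<noteq> 0"
  shows "\<exists>v\<in>V. norm v = 1 \<and> A *v v = (v \<bullet> (A *v v)) *\<^sub>R v"
proof -
  define q where "q x = x \<bullet> (A *v x)" for x :: "real^'n"
  define K where "K = V \<inter> sphere 0 1"
  have "compact K" unfolding K_def
    by (intro closed_Int_compact closed_subspace V compact_sphere)
  obtain x where x: "x \<in> V" "x \<noteq> 0" using nz by blast
  have "(1/norm x) *\<^sub>R x \<in> K" unfolding K_def using x V by (simp add: subspace_scale)
  hence "K \<noteq> {}" by blast
  have "continuous_on K q" unfolding q_def
    by (intro continuous_intros continuous_on_id linear_continuous_on matrix_vector_mul_linear)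
  then obtain v where v: "v \<in> K" "\<And>y. y \<in> K \<Longrightarrow> q y \<le> q v"
    using continuous_attains_sup[OF \<open>compact K\<close> \<open>K \<noteq> {}\<close>] by blast
  have vV: "v \<in> V" and nv: "norm v = 1" using v(1) unfolding K_def by auto
  have vv: "v \<bullet> v = 1" using nv by (simp add: dot_square_norm)
  have max: "q y \<le> q v * norm y ^ 2" if "y \<in> V" for y
  proof (cases "y = 0")
    case True thus ?thesis by (simp add: q_def)
  next
    case False
    have "(1/norm y) *\<^sub>R y \<in> K" unfolding K_def using that False V by (simp add: subspace_scale)
    hence "q ((1/norm y) *\<^sub>R y) \<le> q v" using v(2) by blast
    moreover have "q ((1/norm y) *\<^sub>R y) = q y / norm y ^ 2"
      by (simp add: q_def matrix_vector_mult_scaleR power2_eq_square)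
    ultimately show ?thesis using False by (simp add: divide_le_eq)
  qed
  define u where "u = A *v v - q v *\<^sub>R v"
  have uV: "u \<in> V" unfolding u_def using inv vV V by (simp add: subspace_diff subspace_scale)
  have "v \<bullet> u = 0" unfolding u_def q_def by (simp add: inner_diff_right vv)
  hence "u \<bullet> v = 0" by (simp add: inner_commute)
  moreover have "u \<bullet> (A *v v) = 0"
    using sym_mat_quadratic_form_max_orthogonal[OF A V vV vv _ uV \<open>u \<bullet> v = 0\<close>] max
    unfolding q_def by blast
  ultimately have "u \<bullet> u = 0" by (simp add: u_def inner_diff_right)
  thus ?thesis using vV nv unfolding u_def q_def by auto
qed

lemma sym_mat_eigenvector_orthogonal_complement_invariant:
  fixes A :: "real^'n^'n"
  assumes A: "sym_mat A" and inv: "\<forall>x\<in>V. A *v x \<in> V" and v: "A *v v = \<mu> *\<^sub>R v"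
  shows "\<forall>x\<in>V \<inter> {x. v \<bullet> x = 0}. A *v x \<in> V \<inter> {x. v \<bullet> x = 0}"
proof
  fix x assume x: "x \<in> V \<inter> {x. v \<bullet> x = 0}"
  have "v \<bullet> (A *v x) = (A *v v) \<bullet> x" using sym_mat_inner_commute[OF A, of v x] by simp
  also have "\<dots> = 0" using x by (simp add: v)
  finally show "A *v x \<in> V \<inter> {x. v \<bullet> x = 0}" using x inv by auto
qed

lemma subspace_subset_span_insert_orthogonal:
  assumes V: "subspace V" and v: "v \<in> V" "v \<bullet> v = 1" and B: "V \<inter> {x. v \<bullet> x = 0} \<subseteq> span B"
  shows "V \<subseteq> span (insert v B)"
proof
  fix x assume x: "x \<in> V"
  have "x - (v \<bullet> x) *\<^sub>R v \<in> V \<inter> {x. v \<bullet> x = 0}" using x v V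
    by (simp add: subspace_diff subspace_scale inner_diff_right)
  hence "x - (v \<bullet> x) *\<^sub>R v \<in> span (insert v B)" using B span_mono[of B "insert v B"] by blast
  moreover have "(v \<bullet> x) *\<^sub>R v \<in> span (insert v B)" by (intro span_mul span_base) simp
  ultimately have "(x - (v \<bullet> x) *\<^sub>R v) + (v \<bullet> x) *\<^sub>R v \<in> span (insert v B)"
    by (rule span_add)
  thus "x \<in> span (insert v B)" by simp
qed

lemma sym_mat_invariant_subspace_orthonormal_eigenbasis:
  fixes A :: "real^'n^'n"
  assumes A: "sym_mat A"
  shows "subspace V \<Longrightarrow> (\<forall>x\<in>V. A *v x \<in> V) \<Longrightarrow>
    \<exists>B. B \<subseteq> V \<and> pairwise orthogonal B \<and> (\<forall>b\<in>B. norm b = 1 \<and> A *v b = (b \<bullet> (A *v b)) *\<^sub>R b)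
      \<and> V \<subseteq> span B"
proof (induct "dim V" arbitrary: V rule: less_induct)
  case less
  show ?case
  proof (cases "\<exists>x\<in>V. x \<noteq> 0")
    case False
    hence "V \<subseteq> span {}" by auto
    thus ?thesis by (intro exI[of _ "{}"]) auto
  next
    case True
    obtain v where v: "v \<in> V" "norm v = 1" "A *v v = (v \<bullet> (A *v v)) *\<^sub>R v"
      using sym_mat_invariant_subspace_eigenvector[OF A less(2,3) True] by blast
    have vv: "v \<bullet> v = 1" using v(2) by (simp add: dot_square_norm)
    define V' where "V' = V \<inter> {x. v \<bullet> x = 0}"
    have sV': "subspace V'" unfolding V'_def
      by (intro subspace_inter less(2) subspace_hyperplane)
    have iV': "\<forall>x\<in>V'. A *v x \<in> V'"
      unfolding V'_def by (rule sym_mat_eigenvector_orthogonal_complement_invariant[OF A less(3) v(3)])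
    have "V' \<subset> V" unfolding V'_def using v(1) vv
      by (metis (mono_tags, lifting) Int_iff inf_le1 mem_Collect_eq psubsetI zero_neq_one)
    hence "span V' \<subset> span V" using sV' less(2) by (metis span_eq_iff)
    hence "dim V' < dim V" by (rule dim_psubset)
    from less(1)[OF this sV' iV'] obtain B' where B': "B' \<subseteq> V'" "pairwise orthogonal B'"
      "\<forall>b\<in>B'. norm b = 1 \<and> A *v b = (b \<bullet> (A *v b)) *\<^sub>R b" "V' \<subseteq> span B'" by blast
    have "orthogonal v y" if "y \<in> B'" for y
      using that B'(1) unfolding V'_def orthogonal_def by auto
    hence "pairwise orthogonal (insert v B')"
      using B'(2) by (simp add: pairwise_insert orthogonal_commute)
    moreover have "V \<subseteq> span (insert v B')"
      using subspace_subset_span_insert_orthogonal[OF less(2) v(1) vv] B'(4) unfolding V'_def .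
    moreover have "insert v B' \<subseteq> V" using B'(1) v(1) unfolding V'_def by blast
    moreover have "\<forall>b\<in>insert v B'. norm b = 1 \<and> A *v b = (b \<bullet> (A *v b)) *\<^sub>R b"
      using B'(3) v(2,3) by blast
    ultimately show ?thesis by blast
  qed
qed

theorem sym_mat_spectral_decomposition:
  fixes A :: "real^'n^'n"
  assumes A: "sym_mat A"
  obtains U d where "orthogonal_matrix U" and "A = U ** diag_mat d ** transpose U"
proof -
  obtain B where B: "pairwise orthogonal B" "\<forall>b\<in>B. norm b = 1 \<and> A *v b = (b \<bullet> (A *v b)) *\<^sub>R b"
    "UNIV \<subseteq> span B"
    using sym_mat_invariant_subspace_orthonormal_eigenbasis[OF A subspace_UNIV] by auto
  have "0 \<notin> B" using B(2) by force
  hence indB: "independent B" using B(1) pairwise_orthogonal_independent by blast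
  have finB: "finite B" using indB by (rule finiteI_independent)
  have "span B = UNIV" using B(3) by auto
  hence "card B = CARD('n)" using dim_eq_card_independent[OF indB] dim_span[of B] by simp
  then obtain g where g: "bij_betw g (UNIV::'n set) B"
    by (metis finite_class.finite_UNIV finite_same_card_bij finB)
  have gn: "\<And>i. norm (g i) = 1" and geig: "\<And>i. A *v g i = (g i \<bullet> (A *v g i)) *\<^sub>R g i"
    using bij_betwE [OF g] B(2) by auto
  have go: "\<And>i j. i \<noteq> j \<Longrightarrow> orthogonal (g i) (g j)"
    using B(1) g by (auto simp: pairwise_def bij_betw_def inj_on_def)
  define U where "U = (\<chi> i j. g j $ i)"
  define d where "d j = g j \<bullet> (A *v g j)" for j
  have oU: "orthogonal_matrix U"
    unfolding U_def by (simp add: orthogonal_matrix_orthonormal_columns column_def gn go)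
  have "(A ** U) $ i $ j = (U ** diag_mat d) $ i $ j" for i j
  proof -
    have "(A ** U) $ i $ j = (A *v g j) $ i"
      unfolding matrix_matrix_mult_def matrix_vector_mult_def U_def by simp
    also have "\<dots> = d j * g j $ i"
      by (subst geig) (simp add: d_def)
    finally show ?thesis by (simp add: matrix_mul_diag_mat_nth U_def)
  qed
  hence AU: "A ** U = U ** diag_mat d" by (simp add: vec_eq_iff)
  have "A = A ** (U ** transpose U)" using oU unfolding orthogonal_matrix_def by simp
  also have "\<dots> = U ** diag_mat d ** transpose U" by (simp add: matrix_mul_assoc AU)
  finally show ?thesis using oU that by blast
qed

section \<open>Spectral functional calculus\<close>

lemma orthogonal_matrix_transpose_mul: "orthogonal_matrix U \<Longrightarrow> transpose U ** U = mat 1"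
  and orthogonal_matrix_mul_transpose: "orthogonal_matrix U \<Longrightarrow> U ** transpose U = mat 1"
  by (simp_all add: orthogonal_matrix_def)

lemma orthogonal_matrix_cancel_transpose_mul: "orthogonal_matrix U \<Longrightarrow> X ** transpose U ** U = X"
  by (metis matrix_mul_assoc matrix_mul_rid orthogonal_matrix_transpose_mul)

lemma orthogonal_matrix_cancel_mul_transpose: "orthogonal_matrix U \<Longrightarrow> X ** U ** transpose U = X"
  by (metis matrix_mul_assoc matrix_mul_rid orthogonal_matrix_mul_transpose)

text \<open>A matrix intertwining two diagonal matrices only connects equal eigenvalues, so it also
  intertwines \<open>f\<close> applied to them; hence the functional calculus does not depend on the
  chosen eigendecomposition.\<close>
lemma orthogonal_diagonalisation_fun_eq:
  fixes U V :: "real^'n^'n"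
  assumes U: "orthogonal_matrix U" and V: "orthogonal_matrix V"
    and eq: "U ** diag_mat d ** transpose U = V ** diag_mat e ** transpose V"
  shows "U ** diag_mat (f \<circ> d) ** transpose U = V ** diag_mat (f \<circ> e) ** transpose V"
proof -
  define W where "W = transpose V ** U"
  have "W ** diag_mat d = transpose V ** (U ** diag_mat d ** transpose U) ** U"
    unfolding W_def by (simp add: matrix_mul_assoc orthogonal_matrix_cancel_transpose_mul[OF U])
  also have "\<dots> = diag_mat e ** W"
    unfolding eq W_def by (simp add: matrix_mul_assoc orthogonal_matrix_transpose_mul[OF V])
  finally have WD: "W ** diag_mat d = diag_mat e ** W" .
  have "(W ** diag_mat (f \<circ> d)) $ i $ j = (diag_mat (f \<circ> e) ** W) $ i $ j" for i j
  proof -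
    have "W$i$j * d j = e i * W$i$j" using arg_cong[OF WD, of "\<lambda>M. M$i$j"]
      by (simp add: matrix_mul_diag_mat_nth diag_mat_matrix_mul_nth)
    hence "W$i$j * f (d j) = f (e i) * W$i$j" by auto
    thus ?thesis by (simp add: matrix_mul_diag_mat_nth diag_mat_matrix_mul_nth)
  qed
  hence WF: "W ** diag_mat (f \<circ> d) = diag_mat (f \<circ> e) ** W" by (simp add: vec_eq_iff)
  have "U ** diag_mat (f \<circ> d) ** transpose U = V ** (W ** diag_mat (f \<circ> d)) ** transpose U"
    unfolding W_def by (simp add: matrix_mul_assoc orthogonal_matrix_mul_transpose[OF V])
  also have "\<dots> = V ** diag_mat (f \<circ> e) ** (W ** transpose U)"
    unfolding WF by (simp add: matrix_mul_assoc)
  also have "W ** transpose U = transpose V"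
    unfolding W_def by (simp add: matrix_mul_assoc orthogonal_matrix_cancel_mul_transpose[OF U])
  finally show ?thesis .
qed

lemma spec_fun_eq:
  assumes U: "orthogonal_matrix U" and A: "A = U ** diag_mat d ** transpose U"
  shows "spec_fun f A = U ** diag_mat (f \<circ> d) ** transpose U"
  unfolding spec_fun_def
proof (rule the_equality)
  fix B assume "\<exists>V e. orthogonal_matrix V \<and> A = V ** diag_mat e ** transpose V \<and>
      B = V ** diag_mat (f \<circ> e) ** transpose V"
  then obtain V e where V: "orthogonal_matrix V" "A = V ** diag_mat e ** transpose V"
    "B = V ** diag_mat (f \<circ> e) ** transpose V" by blast
  show "B = U ** diag_mat (f \<circ> d) ** transpose U"
    using orthogonal_diagonalisation_fun_eq[OF V(1) U, of e d f] V A by simp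
qed (use U A in blast)

lemma scaleR_orthogonal_diagonalisation:
  "c *\<^sub>R (U ** diag_mat g ** W) = U ** diag_mat (\<lambda>i. c * g i) ** (W :: real^'n^'n)"
proof -
  have "c *\<^sub>R diag_mat g = diag_mat (\<lambda>i. c * g i)" by (simp add: vec_eq_iff diag_mat_def)
  thus ?thesis by (metis matrix_scalar_ac scalar_matrix_assoc)
qed

lemma matrix_add_rdistrib: "((A::'a::semiring_1^'n^'m) + B) ** C = A ** C + B ** C"
  by (vector matrix_matrix_mult_def sum.distrib[symmetric] field_simps)

lemma add_orthogonal_diagonalisation:
  "U ** diag_mat f ** W + U ** diag_mat g ** W = U ** diag_mat (\<lambda>i. f i + g i) ** (W :: real^'n^'n)"
proof -
  have diag: "diag_mat f + diag_mat g = diag_mat (\<lambda>i. f i + g i)" by (simp add: vec_eq_iff diag_mat_def)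
  show ?thesis by (simp add: matrix_add_ldistrib matrix_add_rdistrib flip: diag)
qed

lemma mult_orthogonal_diagonalisation:
  assumes "orthogonal_matrix U"
  shows "(U ** diag_mat f ** transpose U) ** (U ** diag_mat g ** transpose U)
    = U ** diag_mat (\<lambda>i. f i * g i) ** transpose U"
proof -
  have diag: "diag_mat f ** diag_mat g = diag_mat (\<lambda>i. f i * g i)"
    by (simp add: vec_eq_iff matrix_mul_diag_mat_nth) (simp add: diag_mat_def)
  show ?thesis
    by (simp add: matrix_mul_assoc orthogonal_matrix_cancel_transpose_mul[OF assms] flip: diag)
qed

lemma diag_mat_1: "diag_mat (\<lambda>i. 1) = mat 1"
  by (simp add: vec_eq_iff diag_mat_def mat_def)

lemma one_orthogonal_diagonalisation:
  "orthogonal_matrix U \<Longrightarrow> U ** diag_mat (\<lambda>i. 1) ** transpose U = mat 1"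
  by (simp add: diag_mat_1 orthogonal_matrix_mul_transpose)

lemma mpow_orthogonal_diagonalisation:
  assumes U: "orthogonal_matrix U" and A: "A = U ** diag_mat d ** transpose U"
  shows "mpow \<theta> A = U ** diag_mat (\<lambda>i. exp (\<theta> * ln (d i))) ** transpose U"
proof -
  have "\<theta> *\<^sub>R mlog A = U ** diag_mat (\<lambda>i. \<theta> * ln (d i)) ** transpose U"
    unfolding mlog_def spec_fun_eq[OF U A] by (simp add: scaleR_orthogonal_diagonalisation)
  thus ?thesis unfolding mpow_def mexp_def by (simp add: spec_fun_eq[OF U] comp_def)
qed

lemma mpow_add:
  assumes "sym_mat A"
  shows "mpow \<alpha> A ** mpow \<beta> A = mpow (\<alpha> + \<beta>) A"
proof -
  obtain U d where U: "orthogonal_matrix U" and A: "A = U ** diag_mat d ** transpose U"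
    using sym_mat_spectral_decomposition[OF assms] .
  show ?thesis unfolding mpow_orthogonal_diagonalisation[OF U A] mult_orthogonal_diagonalisation[OF U]
    by (simp add: exp_add[symmetric] distrib_right)
qed

lemma mpow_0:
  assumes "sym_mat A"
  shows "mpow 0 A = mat 1"
proof -
  obtain U d where U: "orthogonal_matrix U" and A: "A = U ** diag_mat d ** transpose U"
    using sym_mat_spectral_decomposition[OF assms] .
  show ?thesis unfolding mpow_orthogonal_diagonalisation[OF U A]
    using one_orthogonal_diagonalisation[OF U] by simp
qed

section \<open>Frobenius norm estimates\<close>

lemma power2_norm_vec: "norm (x::real^'n) ^ 2 = (\<Sum>i\<in>UNIV. (x$i)\<^sup>2)"
  unfolding power2_norm_eq_inner inner_vec_def by (simp add: power2_eq_square)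

lemma power2_norm_mat: "norm (A::real^'n^'m) ^ 2 = (\<Sum>i\<in>UNIV. norm (A$i) ^ 2)"
  by (simp add: power2_norm_eq_inner inner_vec_def)

lemma norm_matrix_vector_mult_le: "norm (A *v x) \<le> norm (A::real^'n^'m) * norm (x::real^'n)"
proof -
  have "norm (A *v x) ^ 2 = (\<Sum>i\<in>UNIV. (A$i \<bullet> x)\<^sup>2)"
    unfolding power2_norm_vec by (simp add: matrix_vector_mult_def inner_vec_def)
  also have "\<dots> \<le> (\<Sum>i\<in>UNIV. (norm (A$i) * norm x)\<^sup>2)"
  proof (intro sum_mono)
    fix i
    have "\<bar>A$i \<bullet> x\<bar>\<^sup>2 \<le> (norm (A$i) * norm x)\<^sup>2"
      by (intro power_mono Cauchy_Schwarz_ineq2) auto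
    thus "(A$i \<bullet> x)\<^sup>2 \<le> (norm (A$i) * norm x)\<^sup>2" by simp
  qed
  also have "\<dots> = (norm A * norm x)\<^sup>2"
    unfolding power_mult_distrib power2_norm_mat[of A] sum_distrib_right ..
  finally show ?thesis by (rule power2_le_imp_le) simp
qed

lemma abs_quadratic_form_le: "\<bar>x \<bullet> (A *v x)\<bar> \<le> norm (A::real^'n^'n) * norm x ^ 2"
proof -
  have "\<bar>x \<bullet> (A *v x)\<bar> \<le> norm x * norm (A *v x)" by (rule Cauchy_Schwarz_ineq2)
  also have "\<dots> \<le> norm x * (norm A * norm x)"
    by (intro mult_left_mono norm_matrix_vector_mult_le) auto
  finally show ?thesis by (simp add: power2_eq_square mult_ac)
qed

lemma norm_transpose: "norm (transpose (Y::real^'n^'m)) = norm Y"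
proof -
  have "norm (transpose Y) ^ 2 = (\<Sum>i\<in>UNIV. \<Sum>j\<in>UNIV. (Y$j$i)\<^sup>2)"
    unfolding power2_norm_mat power2_norm_vec by (simp add: transpose_def)
  also have "\<dots> = (\<Sum>j\<in>UNIV. \<Sum>i\<in>UNIV. (Y$j$i)\<^sup>2)" by (rule sum.swap)
  also have "\<dots> = norm Y ^ 2" unfolding power2_norm_mat power2_norm_vec ..
  finally show ?thesis by (simp add: power2_eq_iff_nonneg)
qed

lemma sym_mat_norm_matrix_mul_le:
  fixes M :: "real^'n^'n" and Y :: "real^'n^'m" and Z :: "real^'m^'n"
  assumes r: "\<And>x. norm (M *v x) \<le> r * norm x" and s: "sym_mat M"
  shows sym_mat_norm_matrix_mul_right_le: "norm (Y ** M) \<le> r * norm Y"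
    and sym_mat_norm_matrix_mul_left_le: "norm (M ** Z) \<le> r * norm Z"
proof -
  have "norm (M *v axis undefined 1) \<le> r" using r[of "axis undefined 1"] by (simp add: norm_axis_1)
  hence r0: "0 \<le> r" by (rule order_trans[OF norm_ge_zero])
  have right: "norm (Y' ** M) \<le> r * norm Y'" for Y' :: "real^'n^'k"
  proof -
    have "M $ k $ j = M $ j $ k" for j k
      using arg_cong[OF s[unfolded sym_mat_def], of "\<lambda>A. A $ j $ k"] by (simp add: transpose_def)
    hence row: "(Y' ** M) $ i = M *v (Y' $ i)" for i
      by (simp add: vec_eq_iff matrix_matrix_mult_def matrix_vector_mult_def mult.commute)
    have "norm (Y' ** M) ^ 2 \<le> (\<Sum>i\<in>UNIV. (r * norm (Y'$i))\<^sup>2)"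
      unfolding power2_norm_mat row by (intro sum_mono power_mono r) auto
    also have "\<dots> = (r * norm Y')\<^sup>2"
      unfolding power_mult_distrib power2_norm_mat[of Y'] sum_distrib_left ..
    finally show ?thesis by (rule power2_le_imp_le) (simp add: r0)
  qed
  show "norm (Y ** M) \<le> r * norm Y" by (rule right)
  have "norm (M ** Z) = norm (transpose Z ** M)"
    using s unfolding sym_mat_def by (metis matrix_transpose_mul norm_transpose)
  also have "\<dots> \<le> r * norm Z" using right[of "transpose Z"] by (simp add: norm_transpose)
  finally show "norm (M ** Z) \<le> r * norm Z" .
qed

text \<open>Polarisation: for symmetric \<open>M\<close> the operator norm equals the numerical radius.\<close>
lemma sym_mat_norm_bound_of_quadratic_form:
  fixes M :: "real^'n^'n"
  assumes s: "sym_mat M" and r: "\<And>x. \<bar>x \<bullet> (M *v x)\<bar> \<le> r * norm x ^ 2"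
  shows "norm (M *v x) \<le> r * norm x"
proof (cases "M *v x = 0")
  case True
  have "0 \<le> r" using r[of "axis undefined 1"] by (simp add: norm_axis_1)
  thus ?thesis using True by simp
next
  case False
  define y where "y = M *v x"
  have yn: "norm y > 0" using False y_def by simp
  have key: "4 * (z \<bullet> y) \<le> 2 * r * (norm x ^ 2 + norm z ^ 2)" for z
  proof -
    have "x \<bullet> (M *v z) = z \<bullet> y"
      unfolding y_def using sym_mat_inner_commute[OF s, of z x] by (simp add: inner_commute)
    hence "4 * (z \<bullet> y) = (x + z) \<bullet> (M *v (x + z)) - (x - z) \<bullet> (M *v (x - z))"
      unfolding y_def by (simp add: matrix_vector_right_distrib matrix_vector_mult_diff_distrib
          inner_add_left inner_add_right inner_diff_left inner_diff_right)
    also have "\<dots> \<le> r * norm (x + z) ^ 2 + r * norm (x - z) ^ 2"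
      using r[of "x + z"] r[of "x - z"] by linarith
    also have "norm (x + z) ^ 2 + norm (x - z) ^ 2 = 2 * (norm x ^ 2 + norm z ^ 2)"
      by (simp add: dot_square_norm[symmetric] inner_add_left inner_add_right inner_diff_left
          inner_diff_right inner_commute)
    hence "r * norm (x + z) ^ 2 + r * norm (x - z) ^ 2 = 2 * r * (norm x ^ 2 + norm z ^ 2)"
      by (metis distrib_left mult.assoc mult.commute)
    finally show ?thesis .
  qed
  define z where "z = (norm x / norm y) *\<^sub>R y"
  have "z \<bullet> y = norm x * norm y" unfolding z_def using yn
    by (simp add: dot_square_norm power2_eq_square)
  moreover have "norm z = norm x" unfolding z_def using yn by simp
  ultimately have "norm x * norm y \<le> norm x * (r * norm x)"
    using key[of z] by (simp add: power2_eq_square algebra_simps)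
  moreover have "norm x > 0" using False by auto
  ultimately show ?thesis unfolding y_def by simp
qed

section \<open>Power series of matrices\<close>

lemma bounded_bilinear_matrix_mul:
  "bounded_bilinear ((**) :: real^'n^'n \<Rightarrow> real^'n^'n \<Rightarrow> real^'n^'n)"
proof -
  have "bilinear ((**) :: real^'n^'n \<Rightarrow> real^'n^'n \<Rightarrow> real^'n^'n)"
    unfolding bilinear_def
    by (auto intro!: linearI simp: matrix_add_ldistrib matrix_add_rdistrib matrix_scalar_ac
        scalar_matrix_assoc)
  thus ?thesis by (simp add: bilinear_conv_bounded_bilinear)
qed

fun mat_power :: "real^'n^'n \<Rightarrow> nat \<Rightarrow> real^'n^'n" where
  "mat_power M 0 = mat 1"
| "mat_power M (Suc k) = M ** mat_power M k"

fun mat_power_deriv :: "real^'n^'n \<Rightarrow> real^'n^'n \<Rightarrow> nat \<Rightarrow> real^'n^'n" where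
  "mat_power_deriv M Y 0 = 0"
| "mat_power_deriv M Y (Suc k) = Y ** mat_power M k + M ** mat_power_deriv M Y k"

lemma has_vector_derivative_mat_power:
  "((\<lambda>t. mat_power (M + t *\<^sub>R Y) k) has_vector_derivative mat_power_deriv (M + t *\<^sub>R Y) Y k)
    (at t within T)"
proof (induct k)
  case 0
  show ?case by (simp add: has_vector_derivative_const)
next
  case (Suc k)
  have "((\<lambda>t. M + t *\<^sub>R Y) has_vector_derivative Y) (at t within T)"
    by (auto intro!: derivative_eq_intros)
  from bounded_bilinear.has_vector_derivative[OF bounded_bilinear_matrix_mul this Suc]
  show ?case by (simp add: add.commute)
qed

lemma norm_matrix_mul_mat_power_le:
  assumes r: "\<And>x. norm (M *v x) \<le> r * norm x" and s: "sym_mat M" and r0: "0 \<le> r"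
  shows "norm (Z ** mat_power M k) \<le> r ^ k * norm (Z::real^'n^'n)"
proof (induct k arbitrary: Z)
  case 0 thus ?case by simp
next
  case (Suc k)
  have "norm (Z ** mat_power M (Suc k)) = norm ((Z ** M) ** mat_power M k)"
    by (simp add: matrix_mul_assoc)
  also have "\<dots> \<le> r ^ k * norm (Z ** M)" by (rule Suc)
  also have "\<dots> \<le> r ^ k * (r * norm Z)"
    by (intro mult_left_mono sym_mat_norm_matrix_mul_right_le[OF r s]) (simp add: r0)
  finally show ?case by (simp add: algebra_simps)
qed

lemma norm_mat_power_deriv_le:
  assumes r: "\<And>x. norm (M *v x) \<le> r * norm x" and s: "sym_mat M" and r0: "0 \<le> r"
  shows "norm (mat_power_deriv M Y k) \<le> real k * r ^ (k - 1) * norm (Y::real^'n^'n)"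
proof (induct k)
  case 0 thus ?case by simp
next
  case (Suc k)
  have "norm (mat_power_deriv M Y (Suc k)) \<le> norm (Y ** mat_power M k) + norm (M ** mat_power_deriv M Y k)"
    by (simp add: norm_triangle_ineq)
  also have "\<dots> \<le> r ^ k * norm Y + r * (real k * r ^ (k - 1) * norm Y)"
    by (intro add_mono norm_matrix_mul_mat_power_le[OF r s r0]
        order_trans[OF sym_mat_norm_matrix_mul_left_le[OF r s]] mult_left_mono Suc r0)
  also have "r * (real k * r ^ (k - 1) * norm Y) = real k * r ^ k * norm Y"
    by (cases k) (simp_all add: algebra_simps)
  finally show ?case by (simp add: algebra_simps)
qed

lemma summable_mat_power_series:
  fixes M :: "real^'n^'n"
  assumes r: "\<And>x. norm (M *v x) \<le> r * norm x" and s: "sym_mat M" and r0: "0 \<le> r"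
    and sa: "summable (\<lambda>n. \<bar>a n\<bar> * r ^ n)"
  shows "summable (\<lambda>n. a n *\<^sub>R mat_power M n)"
proof (rule summable_comparison_test[OF _ summable_mult2[OF sa]])
  have "norm (mat_power M n) \<le> r ^ n * norm (mat 1 :: real^'n^'n)" for n
    using norm_matrix_mul_mat_power_le[OF r s r0, of "mat 1" n] by simp
  thus "\<exists>N. \<forall>n\<ge>N. norm (a n *\<^sub>R mat_power M n) \<le> \<bar>a n\<bar> * r ^ n * norm (mat 1 :: real^'n^'n)"
    by (auto simp: mult.assoc intro!: mult_left_mono)
qed

lemma eventually_uniform_scaleR_partial_sums:
  fixes T :: "nat \<Rightarrow> real \<Rightarrow> 'a::banach"
  assumes s\<beta>: "summable \<beta>" and Tb: "\<And>n x. x \<in> S \<Longrightarrow> norm (T n x) \<le> \<beta> n" and e: "e > 0"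
  shows "\<forall>\<^sub>F n in sequentially. \<forall>x\<in>S. \<forall>h::real.
    norm ((\<Sum>i<n. h *\<^sub>R T i x) - h *\<^sub>R (\<Sum>i. T i x)) \<le> e * norm h"
proof -
  have "\<forall>\<^sub>F n in sequentially. dist (\<Sum>i<n. \<beta> i) (suminf \<beta>) < e"
    using summable_LIMSEQ[OF s\<beta>] e by (rule tendstoD)
  thus ?thesis
  proof (rule eventually_mono, intro ballI allI)
    fix n x h assume n: "dist (\<Sum>i<n. \<beta> i) (suminf \<beta>) < e" and x: "x \<in> S"
    have sT: "summable (\<lambda>i. T i x)"
      by (rule summable_comparison_test[OF _ s\<beta>]) (use Tb x in auto)
    have "norm ((\<Sum>i<n. T i x) - (\<Sum>i. T i x)) = norm (\<Sum>i. T (i + n) x)"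
      using suminf_minus_initial_segment[OF sT, of n] by (metis norm_minus_commute)
    also have "\<dots> \<le> (\<Sum>i. \<beta> (i + n))"
      by (rule norm_suminf_le) (use Tb x summable_ignore_initial_segment[OF s\<beta>] in auto)
    also have "\<dots> = suminf \<beta> - (\<Sum>i<n. \<beta> i)" by (rule suminf_minus_initial_segment[OF s\<beta>])
    also have "\<dots> \<le> e" using n by (simp add: dist_real_def)
    finally have "\<bar>h\<bar> * norm ((\<Sum>i<n. T i x) - (\<Sum>i. T i x)) \<le> \<bar>h\<bar> * e"
      by (rule mult_left_mono) simp
    moreover have "(\<Sum>i<n. h *\<^sub>R T i x) - h *\<^sub>R (\<Sum>i. T i x) = h *\<^sub>R ((\<Sum>i<n. T i x) - (\<Sum>i. T i x))"
      by (simp add: scaleR_sum_right scaleR_diff_right)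
    ultimately show "norm ((\<Sum>i<n. h *\<^sub>R T i x) - h *\<^sub>R (\<Sum>i. T i x)) \<le> e * norm h"
      by (simp add: mult.commute)
  qed
qed

lemma mat_power_series_has_vector_derivative:
  fixes M Y :: "real^'n^'n" and a :: "nat \<Rightarrow> real"
  assumes \<delta>: "\<delta> > 0" and r0: "0 \<le> r"
    and sym: "\<And>t. sym_mat (M + t *\<^sub>R Y)"
    and bnd: "\<And>t x. t \<in> ball 0 \<delta> \<Longrightarrow> norm ((M + t *\<^sub>R Y) *v x) \<le> r * norm x"
    and sa: "summable (\<lambda>n. \<bar>a n\<bar> * r ^ n)"
    and sd: "summable (\<lambda>n. \<bar>a n\<bar> * (real n * r ^ (n - 1)))"
  obtains g D where "\<And>t. t \<in> ball 0 \<delta> \<Longrightarrow> (\<lambda>n. a n *\<^sub>R mat_power (M + t *\<^sub>R Y) n) sums g t"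
    and "(g has_vector_derivative D) (at 0)"
proof -
  define S where "S = ball (0::real) \<delta>"
  define T where "T n t = a n *\<^sub>R mat_power_deriv (M + t *\<^sub>R Y) Y n" for n t
  define \<beta> where "\<beta> n = \<bar>a n\<bar> * (real n * r ^ (n - 1)) * norm Y" for n
  have s\<beta>: "summable \<beta>" unfolding \<beta>_def by (intro summable_mult2 sd)
  have Tb: "norm (T n t) \<le> \<beta> n" if "t \<in> S" for n t
    using mult_left_mono[OF norm_mat_power_deriv_le[OF bnd[OF that[unfolded S_def]] sym r0], of "\<bar>a n\<bar>"]
    by (simp add: T_def \<beta>_def mult.assoc)
  have "0 \<in> S" unfolding S_def using \<delta> by simp
  have summable0: "summable (\<lambda>n. a n *\<^sub>R mat_power (M + 0 *\<^sub>R Y) n)"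
    by (rule summable_mat_power_series[OF bnd sym r0 sa]) (use \<open>0 \<in> S\<close> S_def in simp)
  have "\<exists>g. \<forall>x\<in>S. (\<lambda>n. a n *\<^sub>R mat_power (M + x *\<^sub>R Y) n) sums g x \<and>
      (g has_derivative (\<lambda>h. h *\<^sub>R (\<Sum>n. T n x))) (at x within S)"
  proof (rule has_derivative_series[where f'="\<lambda>n t h. h *\<^sub>R T n t"])
    show "(\<lambda>n. a n *\<^sub>R mat_power (M + 0 *\<^sub>R Y) n) sums (\<Sum>n. a n *\<^sub>R mat_power (M + 0 *\<^sub>R Y) n)"
      by (rule summable_sums[OF summable0])
    show "convex S" unfolding S_def by simp
    show "0 \<in> S" by fact
  next
    fix n x
    show "((\<lambda>t. a n *\<^sub>R mat_power (M + t *\<^sub>R Y) n) has_derivative (\<lambda>h. h *\<^sub>R T n x)) (at x within S)"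
      using bounded_linear.has_vector_derivative[OF bounded_linear_scaleR_right
          has_vector_derivative_mat_power, of "a n"]
      unfolding has_vector_derivative_def T_def .
  next
    fix e :: real assume "e > 0"
    thus "\<forall>\<^sub>F n in sequentially. \<forall>x\<in>S. \<forall>h.
        norm ((\<Sum>i<n. h *\<^sub>R T i x) - h *\<^sub>R (\<Sum>n. T n x)) \<le> e * norm h"
      using eventually_uniform_scaleR_partial_sums[of \<beta> S T e] s\<beta> Tb by blast
  qed
  then obtain g where g: "\<And>x. x \<in> S \<Longrightarrow> (\<lambda>n. a n *\<^sub>R mat_power (M + x *\<^sub>R Y) n) sums g x"
    "\<And>x. x \<in> S \<Longrightarrow> (g has_derivative (\<lambda>h. h *\<^sub>R (\<Sum>n. T n x))) (at x within S)"
    by blast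
  have "(g has_derivative (\<lambda>h. h *\<^sub>R (\<Sum>n. T n 0))) (at 0)"
    using g(2)[OF \<open>0 \<in> S\<close>] at_within_open[OF \<open>0 \<in> S\<close>] unfolding S_def by simp
  thus ?thesis using that g(1) unfolding S_def has_vector_derivative_def by blast
qed

lemma summable_binomial_coeffs:
  fixes r \<theta> :: real
  defines "a \<equiv> \<lambda>n. (\<theta> gchoose n) * (-1) ^ n"
  assumes r0: "0 \<le> r" and r1: "r < 1"
  shows "summable (\<lambda>n. \<bar>a n\<bar> * r ^ n)" "summable (\<lambda>n. \<bar>a n\<bar> * (real n * r ^ (n - 1)))"
proof -
  have conv: "summable (\<lambda>n. a n * y ^ n)" if "norm y < 1" for y :: real
  proof -
    have "\<bar>- y\<bar> < 1" using that by simp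
    from sums_summable[OF gen_binomial_real[OF this, of \<theta>]]
    show ?thesis by (simp add: a_def power_minus' mult.assoc)
  qed
  define x0 where "x0 = (1 + r) / 2"
  have x0: "norm x0 < 1" "norm r < norm x0" using r0 r1 by (auto simp: x0_def)
  have "summable (\<lambda>n. norm (a n * r ^ n))" by (rule powser_insidea[OF conv[OF x0(1)] x0(2)])
  thus "summable (\<lambda>n. \<bar>a n\<bar> * r ^ n)" using r0 by (simp add: abs_mult)
  have "summable (\<lambda>n. diffs a n * x0 ^ n)" by (rule termdiff_converges[OF x0(1) conv])
  hence "summable (\<lambda>n. norm (diffs a n * r ^ n))" by (rule powser_insidea[OF _ x0(2)])
  hence "summable (\<lambda>n. \<bar>a (Suc n)\<bar> * (real (Suc n) * r ^ (Suc n - 1)))"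
    using r0 by (simp add: diffs_def abs_mult mult_ac)
  thus "summable (\<lambda>n. \<bar>a n\<bar> * (real n * r ^ (n - 1)))" by (rule summable_Suc_iff[THEN iffD1])
qed

section \<open>Differentiability of matrix powers\<close>

lemma orthogonal_diagonalisation_eigenvalue:
  assumes U: "orthogonal_matrix U" and A: "A = U ** diag_mat d ** transpose U"
  shows "d j = column j U \<bullet> (A *v column j U)" and "norm (column j U) = 1"
proof -
  have AU: "A ** U = U ** diag_mat d"
    using A orthogonal_matrix_cancel_transpose_mul[OF U] by (simp add: matrix_mul_assoc)
  have "(A *v column j U) $ i = (A ** U) $ i $ j" for i
    by (simp add: matrix_matrix_mult_def matrix_vector_mult_def column_def)
  hence "A *v column j U = d j *\<^sub>R column j U"
    by (simp add: vec_eq_iff AU matrix_mul_diag_mat_nth column_def)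
  moreover show "norm (column j U) = 1"
    using U by (simp add: orthogonal_matrix_orthonormal_columns)
  ultimately show "d j = column j U \<bullet> (A *v column j U)"
    by (simp add: dot_square_norm)
qed

lemma spd_imp_quadratic_form_ge:
  fixes S :: "real^'n^'n"
  assumes "spd S"
  obtains a where "a > 0" and "\<And>x. a * norm x ^ 2 \<le> x \<bullet> (S *v x)"
proof -
  define q where "q x = x \<bullet> (S *v x)" for x :: "real^'n"
  have K: "compact (sphere (0::real^'n) 1)" "sphere (0::real^'n) 1 \<noteq> {}"
    using norm_axis_1[of undefined] by auto
  have "continuous_on (sphere 0 1) q" unfolding q_def
    by (intro continuous_intros continuous_on_id linear_continuous_on matrix_vector_mul_linear)
  then obtain v where v: "v \<in> sphere 0 1" "\<And>y. y \<in> sphere 0 1 \<Longrightarrow> q v \<le> q y"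
    using continuous_attains_inf[OF K] by blast
  have "v \<noteq> 0" using v(1) by auto
  hence "q v > 0" using assms unfolding spd_def q_def by blast
  moreover have "q v * norm x ^ 2 \<le> x \<bullet> (S *v x)" for x
  proof (cases "x = 0")
    case False
    have "q v \<le> q ((1/norm x) *\<^sub>R x)" using False by (intro v(2)) simp
    also have "q ((1/norm x) *\<^sub>R x) = q x / norm x ^ 2"
      by (simp add: q_def matrix_vector_mult_scaleR power2_eq_square)
    finally show ?thesis using False by (simp add: le_divide_eq q_def)
  qed simp
  ultimately show ?thesis using that by blast
qed

lemma spd_of_quadratic_form_ge:
  fixes A :: "real^'n^'n"
  assumes "sym_mat A" and "\<kappa> > 0" and "\<And>x. \<kappa> * norm x ^ 2 \<le> x \<bullet> (A *v x)"
  shows "spd A"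
  unfolding spd_def
proof (intro conjI allI impI \<open>sym_mat A\<close>)
  fix x :: "real^'n" assume "x \<noteq> 0"
  hence "0 < \<kappa> * norm x ^ 2" using \<open>\<kappa> > 0\<close> by simp
  thus "0 < x \<bullet> (A *v x)" using assms(3)[of x] by linarith
qed

lemma mat_power_orthogonal_diagonalisation:
  assumes U: "orthogonal_matrix U"
  shows "mat_power (U ** diag_mat x ** transpose U) n = U ** diag_mat (\<lambda>j. x j ^ n) ** transpose U"
  by (induct n) (simp_all add: one_orthogonal_diagonalisation[OF U] mult_orthogonal_diagonalisation[OF U])

lemma sums_orthogonal_diagonalisation:
  fixes U :: "real^'n^'n"
  assumes U: "orthogonal_matrix U" and s: "\<And>j. (\<lambda>n. a n * x j ^ n) sums h j"
  shows "(\<lambda>n. a n *\<^sub>R (U ** diag_mat (\<lambda>j. x j ^ n) ** transpose U)) sums (U ** diag_mat h ** transpose U)"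
proof -
  define L where "L v = U ** diag_mat (\<lambda>j. v $ j) ** transpose U" for v :: "real^'n"
  have "linear L"
    by (rule linearI) (simp_all add: L_def add_orthogonal_diagonalisation scaleR_orthogonal_diagonalisation)
  hence bl: "bounded_linear L" by (simp add: linear_conv_bounded_linear)
  have "(\<lambda>n. \<chi> j. a n * x j ^ n) sums (\<chi> j. h j)"
    unfolding sums_def
  proof (rule vec_tendstoI)
    fix i
    show "((\<lambda>n. (\<Sum>k<n. \<chi> j. a k * x j ^ k) $ i) \<longlongrightarrow> (\<chi> j. h j) $ i) sequentially"
      using s[of i] unfolding sums_def by simp
  qed
  from bounded_linear.sums[OF bl this] show ?thesis
    by (simp add: L_def scaleR_orthogonal_diagonalisation)
qed

lemma spd_eigenvalue_bounds:
  fixes A :: "real^'n^'n"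
  assumes A: "spd A" and c: "\<And>x. x \<bullet> (A *v x) \<le> c * norm x ^ 2"
    and U: "orthogonal_matrix U" and Ad: "A = U ** diag_mat d ** transpose U"
  shows "0 < d j" and "d j \<le> c"
proof -
  note col = orthogonal_diagonalisation_eigenvalue[OF U Ad, of j]
  have "column j U \<noteq> 0" using col(2) by (metis norm_zero zero_neq_one)
  hence "0 < column j U \<bullet> (A *v column j U)" using A unfolding spd_def by blast
  thus "0 < d j" using col(1) by simp
  show "d j \<le> c" using c[of "column j U"] col by simp
qed

lemma mat_1_minus_scaleR_orthogonal_diagonalisation:
  assumes U: "orthogonal_matrix U" and Ad: "A = U ** diag_mat d ** transpose U"
  shows "mat 1 - k *\<^sub>R A = U ** diag_mat (\<lambda>j. 1 - k * d j) ** transpose U"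
proof -
  have "mat 1 - k *\<^sub>R A = U ** diag_mat (\<lambda>j. 1) ** transpose U + (- k) *\<^sub>R (U ** diag_mat d ** transpose U)"
    unfolding Ad[symmetric] one_orthogonal_diagonalisation[OF U] by simp
  thus ?thesis unfolding scaleR_orthogonal_diagonalisation add_orthogonal_diagonalisation by simp
qed

text \<open>The binomial series \<open>(1 - x) powr \<theta> = \<Sum>n. (\<theta> gchoose n) (-x)\<^sup>n\<close>, applied to the
  eigenvalues \<open>1 - d\<^sub>j/c \<in> [0, 1)\<close> of \<open>I - A/c\<close>.\<close>
lemma mpow_binomial_series:
  fixes A :: "real^'n^'n"
  assumes A: "spd A" and c: "\<And>x. x \<bullet> (A *v x) \<le> c * norm x ^ 2"
  shows "(\<lambda>n. ((\<theta> gchoose n) * (-1) ^ n) *\<^sub>R mat_power (mat 1 - (1 / c) *\<^sub>R A) n)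
    sums ((1 / c powr \<theta>) *\<^sub>R mpow \<theta> A)"
proof -
  obtain U d where U: "orthogonal_matrix U" and Ad: "A = U ** diag_mat d ** transpose U"
    using sym_mat_spectral_decomposition A unfolding spd_def by blast
  note d = spd_eigenvalue_bounds[OF A c U Ad]
  have c0: "c > 0" by (meson d less_le_trans)
  define x where "x j = 1 - d j / c" for j
  have x: "\<bar>- x j\<bar> < 1" for j
  proof -
    have "0 < d j / c" "d j / c \<le> 1" using d[of j] c0 by (simp_all add: divide_le_eq)
    thus ?thesis unfolding x_def by linarith
  qed
  have M: "mat 1 - (1 / c) *\<^sub>R A = U ** diag_mat x ** transpose U"
    unfolding mat_1_minus_scaleR_orthogonal_diagonalisation[OF U Ad] x_def by simp
  have "(\<lambda>n. ((\<theta> gchoose n) * (-1) ^ n) * x j ^ n) sums (d j powr \<theta> / c powr \<theta>)" for j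
  proof -
    have "(1 - x j) powr \<theta> = d j powr \<theta> / c powr \<theta>"
      using d(1)[of j] c0 unfolding x_def by (simp add: powr_divide)
    thus ?thesis
      using gen_binomial_real[OF x[of j], of \<theta>] by (simp add: power_minus' mult.assoc)
  qed
  from sums_orthogonal_diagonalisation[OF U this]
  have "(\<lambda>n. ((\<theta> gchoose n) * (-1) ^ n) *\<^sub>R mat_power (mat 1 - (1 / c) *\<^sub>R A) n)
      sums (U ** diag_mat (\<lambda>j. d j powr \<theta> / c powr \<theta>) ** transpose U)"
    unfolding M mat_power_orthogonal_diagonalisation[OF U] .
  moreover have "(\<lambda>j. 1 / c powr \<theta> * exp (\<theta> * ln (d j))) = (\<lambda>j. d j powr \<theta> / c powr \<theta>)"
  proof
    fix j show "1 / c powr \<theta> * exp (\<theta> * ln (d j)) = d j powr \<theta> / c powr \<theta>"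
      using d(1)[of j] by (simp add: powr_def)
  qed
  ultimately show ?thesis
    unfolding mpow_orthogonal_diagonalisation[OF U Ad] scaleR_orthogonal_diagonalisation by simp
qed

lemma sym_mat_mat_1_minus_scaleR: "sym_mat A \<Longrightarrow> sym_mat (mat 1 - k *\<^sub>R A)"
  by (simp add: sym_mat_def transpose_def vec_eq_iff mat_def)

lemma norm_mat_1_minus_scaleR_le:
  fixes A :: "real^'n^'n"
  assumes A: "sym_mat A" and \<kappa>: "0 < \<kappa>" "\<kappa> \<le> c"
    and bounds: "\<And>x. \<kappa> * norm x ^ 2 \<le> x \<bullet> (A *v x) \<and> x \<bullet> (A *v x) \<le> c * norm x ^ 2"
  shows "norm ((mat 1 - (1 / c) *\<^sub>R A) *v x) \<le> (1 - \<kappa> / c) * norm x"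
proof (rule sym_mat_norm_bound_of_quadratic_form)
  show "sym_mat (mat 1 - (1 / c) *\<^sub>R A)" using A by (rule sym_mat_mat_1_minus_scaleR)
next
  fix y :: "real^'n"
  have "y \<bullet> ((mat 1 - (1 / c) *\<^sub>R A) *v y) = norm y ^ 2 - (y \<bullet> (A *v y)) / c"
    by (simp add: matrix_vector_mult_diff_rdistrib inner_diff_right dot_square_norm
        scaleR_matrix_vector_assoc[symmetric] divide_inverse mult.commute)
  moreover have "\<kappa> / c * norm y ^ 2 \<le> (y \<bullet> (A *v y)) / c"
    using divide_right_mono[OF conjunct1[OF bounds[of y]], of c] \<kappa> by simp
  moreover have "(y \<bullet> (A *v y)) / c \<le> norm y ^ 2"
    using bounds[of y] \<kappa> by (simp add: divide_le_eq mult.commute)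
  moreover have "(1 - \<kappa> / c) * norm y ^ 2 = norm y ^ 2 - \<kappa> / c * norm y ^ 2"
    by (simp add: left_diff_distrib)
  moreover have "0 \<le> \<kappa> / c * norm y ^ 2" using \<kappa> by simp
  ultimately show "\<bar>y \<bullet> ((mat 1 - (1 / c) *\<^sub>R A) *v y)\<bar> \<le> (1 - \<kappa> / c) * norm y ^ 2"
    unfolding abs_le_iff by linarith
qed

lemma quadratic_form_add_scaleR_bounds:
  fixes S X :: "real^'n^'n"
  assumes lower: "\<And>x. a * norm x ^ 2 \<le> x \<bullet> (S *v x)" and t: "\<bar>t\<bar> * norm X \<le> a / 2"
  shows "a / 2 * norm x ^ 2 \<le> x \<bullet> ((S + t *\<^sub>R X) *v x)"
    and "x \<bullet> ((S + t *\<^sub>R X) *v x) \<le> (norm S + a / 2) * norm x ^ 2"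
proof -
  have "\<bar>t * (x \<bullet> (X *v x))\<bar> \<le> \<bar>t\<bar> * norm X * norm x ^ 2"
    unfolding abs_mult mult.assoc by (intro mult_left_mono abs_quadratic_form_le) auto
  also have "\<dots> \<le> a / 2 * norm x ^ 2" using t by (rule mult_right_mono) simp
  finally have "\<bar>t * (x \<bullet> (X *v x))\<bar> \<le> a / 2 * norm x ^ 2" .
  moreover have "x \<bullet> ((S + t *\<^sub>R X) *v x) = x \<bullet> (S *v x) + t * (x \<bullet> (X *v x))"
    by (simp add: matrix_vector_mult_add_rdistrib inner_add_right scaleR_matrix_vector_assoc[symmetric])
  moreover have "x \<bullet> (S *v x) \<le> norm S * norm x ^ 2"
    using abs_quadratic_form_le[of x S] by simp
  moreover have "(norm S + a / 2) * norm x ^ 2 = norm S * norm x ^ 2 + a / 2 * norm x ^ 2"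
    by (simp add: distrib_right)
  moreover have "a * norm x ^ 2 = a / 2 * norm x ^ 2 + a / 2 * norm x ^ 2" by simp
  ultimately show "a / 2 * norm x ^ 2 \<le> x \<bullet> ((S + t *\<^sub>R X) *v x)"
    and "x \<bullet> ((S + t *\<^sub>R X) *v x) \<le> (norm S + a / 2) * norm x ^ 2"
    using lower[of x] unfolding abs_le_iff by linarith+
qed

lemma quadratic_form_bounds_near:
  fixes S X :: "real^'n^'n"
  assumes lower: "\<And>x. a * norm x ^ 2 \<le> x \<bullet> (S *v x)" and a: "a > 0"
  obtains \<delta> where "\<delta> > 0" and "\<And>t x. t \<in> ball 0 \<delta> \<Longrightarrow>
    a / 2 * norm x ^ 2 \<le> x \<bullet> ((S + t *\<^sub>R X) *v x) \<and> x \<bullet> ((S + t *\<^sub>R X) *v x) \<le> (norm S + a / 2) * norm x ^ 2"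
proof -
  define \<delta> where "\<delta> = a / (2 * (norm X + 1))"
  have nX: "norm X + 1 > 0" by (simp add: add_nonneg_pos)
  have "\<delta> > 0" unfolding \<delta>_def using a nX by simp
  moreover have "a / 2 * norm x ^ 2 \<le> x \<bullet> ((S + t *\<^sub>R X) *v x)
      \<and> x \<bullet> ((S + t *\<^sub>R X) *v x) \<le> (norm S + a / 2) * norm x ^ 2" if "t \<in> ball 0 \<delta>" for t x
  proof -
    have "\<bar>t\<bar> * (norm X + 1) \<le> \<delta> * (norm X + 1)" using that by (intro mult_right_mono) auto
    also have "\<delta> * (norm X + 1) = a / 2" unfolding \<delta>_def using nX by (simp add: field_simps)
    finally have "\<bar>t\<bar> * norm X \<le> a / 2" by (simp add: distrib_left)
    from quadratic_form_add_scaleR_bounds[OF lower this] show ?thesis by simp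
  qed
  ultimately show ?thesis using that by blast
qed

text \<open>Near \<open>S\<close>, \<open>mpow \<theta>\<close> is \<open>c powr \<theta>\<close> times the binomial series in \<open>I - (S + tX)/c\<close>,
  whose argument stays in an operator-norm ball of radius \<open>r < 1\<close>.\<close>
lemma mpow_has_vector_derivative:
  fixes S X :: "real^'n^'n"
  assumes S: "spd S" and X: "sym_mat X"
  obtains D where "((\<lambda>t. mpow \<theta> (S + t *\<^sub>R X)) has_vector_derivative D) (at 0)"
proof -
  have sS: "sym_mat S" using S by (simp add: spd_def)
  obtain a where a: "a > 0" and lower: "\<And>x. a * norm x ^ 2 \<le> x \<bullet> (S *v x)"
    using spd_imp_quadratic_form_ge[OF S] by blast
  define c where "c = norm S + a / 2"
  define r where "r = 1 - a / 2 / c"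
  have c: "0 < a / 2" "a / 2 \<le> c" using a unfolding c_def by simp_all
  have r: "0 \<le> r" "r < 1" using c unfolding r_def by (simp_all add: divide_le_eq)
  obtain \<delta> where \<delta>: "\<delta> > 0" and bounds: "\<And>t x. t \<in> ball 0 \<delta> \<Longrightarrow>
      a / 2 * norm x ^ 2 \<le> x \<bullet> ((S + t *\<^sub>R X) *v x) \<and> x \<bullet> ((S + t *\<^sub>R X) *v x) \<le> c * norm x ^ 2"
    using quadratic_form_bounds_near[OF lower a] unfolding c_def by blast
  have spd_line: "spd (S + t *\<^sub>R X)" if "t \<in> ball 0 \<delta>" for t
    by (rule spd_of_quadratic_form_ge[OF sym_mat_add_scaleR[OF sS X] c(1)]) (use bounds[OF that] in blast)
  define M where "M = mat 1 - (1 / c) *\<^sub>R S"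
  define Y where "Y = (- (1 / c)) *\<^sub>R X"
  have MY: "M + t *\<^sub>R Y = mat 1 - (1 / c) *\<^sub>R (S + t *\<^sub>R X)" for t
    unfolding M_def Y_def by (simp add: algebra_simps)
  have sym: "sym_mat (M + t *\<^sub>R Y)" for t
    unfolding MY by (rule sym_mat_mat_1_minus_scaleR[OF sym_mat_add_scaleR[OF sS X]])
  have bnd: "norm ((M + t *\<^sub>R Y) *v x) \<le> r * norm x" if "t \<in> ball 0 \<delta>" for t x
    unfolding MY r_def using sym_mat_add_scaleR[OF sS X] c bounds[OF that]
    by (rule norm_mat_1_minus_scaleR_le)
  obtain g D where g: "\<And>t. t \<in> ball 0 \<delta> \<Longrightarrow>
      (\<lambda>n. ((\<theta> gchoose n) * (-1) ^ n) *\<^sub>R mat_power (M + t *\<^sub>R Y) n) sums g t"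
    and D: "(g has_vector_derivative D) (at 0)"
    using mat_power_series_has_vector_derivative[OF \<delta> r(1) sym bnd summable_binomial_coeffs[OF r]]
    by blast
  have local_eq: "mpow \<theta> (S + t *\<^sub>R X) = c powr \<theta> *\<^sub>R g t" if "t \<in> ball 0 \<delta>" for t
  proof -
    have "(\<lambda>n. ((\<theta> gchoose n) * (-1) ^ n) *\<^sub>R mat_power (M + t *\<^sub>R Y) n)
        sums ((1 / c powr \<theta>) *\<^sub>R mpow \<theta> (S + t *\<^sub>R X))"
      unfolding MY by (rule mpow_binomial_series[OF spd_line[OF that]]) (use bounds[OF that] in blast)
    hence "g t = (1 / c powr \<theta>) *\<^sub>R mpow \<theta> (S + t *\<^sub>R X)"
      using g[OF that] by (rule sums_unique2[symmetric])
    thus ?thesis using c by simp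
  qed
  have "((\<lambda>t. c powr \<theta> *\<^sub>R g t) has_vector_derivative c powr \<theta> *\<^sub>R D) (at 0)"
    by (rule bounded_linear.has_vector_derivative[OF bounded_linear_scaleR_right D])
  hence "((\<lambda>t. mpow \<theta> (S + t *\<^sub>R X)) has_vector_derivative c powr \<theta> *\<^sub>R D) (at 0)"
    by (rule has_vector_derivative_transform_within_open[where S="ball 0 \<delta>"]) (use \<delta> local_eq in auto)
  thus ?thesis by (rule that)
qed

section \<open>Sign symmetries of the metrics\<close>

lemma dphi_eq_of_mpow_derivative:
  assumes \<theta>: "\<theta> \<noteq> 0" and D: "((\<lambda>t. mpow \<theta> (S + t *\<^sub>R X)) has_vector_derivative D) (at 0)"
  shows "dphi \<theta> S X = (1 / \<theta>) *\<^sub>R D"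
proof -
  have "((\<lambda>t. (1 / \<theta>) *\<^sub>R mpow \<theta> (S + t *\<^sub>R X)) has_vector_derivative (1 / \<theta>) *\<^sub>R D) (at 0)"
    by (rule bounded_linear.has_vector_derivative[OF bounded_linear_scaleR_right D])
  hence d: "((\<lambda>t. phi \<theta> (S + t *\<^sub>R X)) has_vector_derivative (1 / \<theta>) *\<^sub>R D) (at 0)"
    using \<theta> by (simp add: phi_def)
  show ?thesis unfolding dphi_def
  proof (rule the_equality)
    fix D' assume "((\<lambda>t. phi \<theta> (S + t *\<^sub>R X)) has_vector_derivative D') (at 0)"
    thus "D' = (1 / \<theta>) *\<^sub>R D" by (rule vector_derivative_unique_at[OF _ d])
  qed (rule d)
qed

lemma matrix_mul_uminus_right: "(A::real^'n^'m) ** (- B) = - (A ** B)"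
  by (simp add: matrix_matrix_mult_def vec_eq_iff sum_negf)

lemma mpow_mult_mpow:
  assumes "sym_mat S" and "a + b = c"
  shows "mpow a S ** mpow b S = mpow c S"
  using mpow_add[OF assms(1)] assms(2) by simp

text \<open>Differentiating \<open>\<Sigma>^\<theta> \<Sigma>^(-\<theta>) = I\<close> along \<open>\<Sigma> + tX\<close>.\<close>
lemma mpow_uminus_vector_derivative:
  fixes S X :: "real^'n^'n"
  assumes S: "sym_mat S" and X: "sym_mat X"
    and Dp: "((\<lambda>t. mpow \<theta> (S + t *\<^sub>R X)) has_vector_derivative Dp) (at 0)"
    and Dm: "((\<lambda>t. mpow (-\<theta>) (S + t *\<^sub>R X)) has_vector_derivative Dm) (at 0)"
  shows "Dm = - (mpow (-\<theta>) S ** Dp ** mpow (-\<theta>) S)"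
proof -
  define P where "P = mpow \<theta> S"
  define Q where "Q = mpow (-\<theta>) S"
  have "((\<lambda>t. mpow \<theta> (S + t *\<^sub>R X) ** mpow (-\<theta>) (S + t *\<^sub>R X)) has_vector_derivative
      P ** Dm + Dp ** Q) (at 0)"
    using bounded_bilinear.has_vector_derivative[OF bounded_bilinear_matrix_mul Dp Dm]
    by (simp add: P_def Q_def)
  moreover have "(\<lambda>t. mpow \<theta> (S + t *\<^sub>R X) ** mpow (-\<theta>) (S + t *\<^sub>R X)) = (\<lambda>t. mat 1)"
    using sym_mat_add_scaleR[OF S X] by (simp add: mpow_add mpow_0)
  ultimately have "((\<lambda>t. mat 1) has_vector_derivative P ** Dm + Dp ** Q) (at 0)" by simp
  hence "P ** Dm + Dp ** Q = 0"
    by (rule vector_derivative_unique_at[OF _ has_vector_derivative_const])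
  hence "P ** Dm = - (Dp ** Q)" by (simp add: eq_neg_iff_add_eq_0)
  hence "Q ** (P ** Dm) = Q ** (- (Dp ** Q))" by simp
  also have "\<dots> = - (Q ** Dp ** Q)" by (simp add: matrix_mul_uminus_right matrix_mul_assoc)
  also have "Q ** (P ** Dm) = Dm"
    unfolding P_def Q_def by (simp add: matrix_mul_assoc mpow_add[OF S] mpow_0[OF S])
  finally show ?thesis unfolding Q_def .
qed

lemma dphi_uminus:
  fixes S X :: "real^'n^'n"
  assumes S: "spd S" and X: "sym_mat X"
  shows "dphi (-\<theta>) S X = mpow (-\<theta>) S ** dphi \<theta> S X ** mpow (-\<theta>) S"
proof (cases "\<theta> = 0")
  case True
  thus ?thesis using S by (simp add: mpow_0 spd_def)
next
  case False
  obtain Dp where Dp: "((\<lambda>t. mpow \<theta> (S + t *\<^sub>R X)) has_vector_derivative Dp) (at 0)"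
    using mpow_has_vector_derivative[OF S X] .
  obtain Dm where Dm: "((\<lambda>t. mpow (-\<theta>) (S + t *\<^sub>R X)) has_vector_derivative Dm) (at 0)"
    using mpow_has_vector_derivative[OF S X] .
  have "dphi (-\<theta>) S X = (1 / (-\<theta>)) *\<^sub>R Dm" using False by (intro dphi_eq_of_mpow_derivative Dm) simp
  also have "\<dots> = (1 / \<theta>) *\<^sub>R (mpow (-\<theta>) S ** Dp ** mpow (-\<theta>) S)"
    using mpow_uminus_vector_derivative[OF _ X Dp Dm] S by (simp add: spd_def)
  also have "\<dots> = mpow (-\<theta>) S ** ((1 / \<theta>) *\<^sub>R Dp) ** mpow (-\<theta>) S"
    by (simp add: matrix_scalar_ac scalar_matrix_assoc)
  also have "(1 / \<theta>) *\<^sub>R Dp = dphi \<theta> S X" by (rule dphi_eq_of_mpow_derivative[OF False Dp, symmetric])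
  finally show ?thesis .
qed

lemma gA_uminus_left:
  fixes S X Y :: "real^'n^'n"
  assumes S: "spd S" and X: "sym_mat X"
  shows "gA (-\<theta>1) \<theta>2 S X Y = gA \<theta>1 \<theta>2 S X Y"
proof -
  have sS: "sym_mat S" using S by (simp add: spd_def)
  define \<theta> where "\<theta> = (\<theta>1 + \<theta>2) / 2"
  define \<theta>' where "\<theta>' = (-\<theta>1 + \<theta>2) / 2"
  define D1 where "D1 = dphi \<theta>1 S X"
  define D2 where "D2 = dphi \<theta>2 S Y"
  have "gA (-\<theta>1) \<theta>2 S X Y
      = trace ((mpow (-\<theta>') S ** mpow (-\<theta>1) S) ** D1 ** mpow (-\<theta>1) S ** mpow (-\<theta>') S ** D2)"
    unfolding gA_def Let_def \<theta>'_def D1_def D2_def dphi_uminus[OF S X] by (simp only: matrix_mul_assoc)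
  also have "\<dots> = trace (mpow (-\<theta>) S ** D1 ** mpow (-\<theta>) S ** D2)"
  proof -
    have "mpow (-\<theta>') S ** mpow (-\<theta>1) S = mpow (-\<theta>) S"
      "mpow (-\<theta>1) S ** mpow (-\<theta>') S = mpow (-\<theta>) S"
      by (rule mpow_mult_mpow[OF sS], simp add: \<theta>_def \<theta>'_def field_simps)+
    thus ?thesis by (simp only: matrix_mul_assoc[symmetric])
  qed
  also have "\<dots> = gA \<theta>1 \<theta>2 S X Y" unfolding gA_def Let_def \<theta>_def D1_def D2_def ..
  finally show ?thesis .
qed

lemma gA_swap: "gA \<theta>1 \<theta>2 S X Y = gA \<theta>2 \<theta>1 S Y X"
proof -
  have "trace (W ** D1 ** W ** D2) = trace (W ** D2 ** W ** D1)" for W D1 D2 :: "real^'n^'n"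
    using trace_mul_sym[of "W ** D1" "W ** D2"] by (simp add: matrix_mul_assoc)
  thus ?thesis unfolding gA_def Let_def by (simp add: add.commute)
qed

lemma gA_uminus_right:
  fixes S X Y :: "real^'n^'n"
  assumes "spd S" and "sym_mat Y"
  shows "gA \<theta>1 (-\<theta>2) S X Y = gA \<theta>1 \<theta>2 S X Y"
  using gA_uminus_left[OF assms] by (simp add: gA_swap[of _ _ S X])

lemma gA_opposite_eq_gE:
  assumes "sym_mat S"
  shows "gA \<theta> (-\<theta>) S X Y = gE \<theta> (-\<theta>) S X Y"
  using assms by (simp add: gA_def gE_def mpow_0)

lemma gE_opposite_eq_gA1:
  fixes S X Y :: "real^'n^'n"
  assumes "spd S" and "sym_mat Y"
  shows "gE \<theta> (-\<theta>) S X Y = gA1 \<theta> S X Y"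
proof -
  define Q where "Q = mpow (-\<theta>) S"
  have "gE \<theta> (-\<theta>) S X Y = trace ((dphi \<theta> S X ** Q ** dphi \<theta> S Y) ** Q)"
    unfolding gE_def dphi_uminus[OF assms] Q_def by (simp add: matrix_mul_assoc)
  also have "\<dots> = trace (Q ** dphi \<theta> S X ** Q ** dphi \<theta> S Y)"
    by (simp add: trace_mul_sym[of _ Q] matrix_mul_assoc)
  finally show ?thesis unfolding gA1_def gA_def Q_def by simp
qed

theorem mainTheorem11:
  fixes \<theta>1 \<theta>2 s1 s2 :: real and S X Y :: "real^'n^'n"
  assumes "spd S" and "sym_mat X" and "sym_mat Y"
    and "s1 \<in> {1, -1}" and "s2 \<in> {1, -1}"
  shows "gA \<theta>1 \<theta>2 S X Y = gA (s1 * \<theta>1) (s2 * \<theta>2) S X Y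
    \<and> gA \<theta>1 (-\<theta>1) S X Y = gE \<theta>1 (-\<theta>1) S X Y
    \<and> gE \<theta>1 (-\<theta>1) S X Y = gA1 \<theta>1 S X Y"
proof (intro conjI)
  have "gA (s1 * \<theta>1) (s2 * \<theta>2) S X Y = gA \<theta>1 (s2 * \<theta>2) S X Y"
    using assms(4) gA_uminus_left[OF assms(1,2)] by auto
  also have "\<dots> = gA \<theta>1 \<theta>2 S X Y"
    using assms(5) gA_uminus_right[OF assms(1,3)] by auto
  finally show "gA \<theta>1 \<theta>2 S X Y = gA (s1 * \<theta>1) (s2 * \<theta>2) S X Y" ..
  show "gA \<theta>1 (-\<theta>1) S X Y = gE \<theta>1 (-\<theta>1) S X Y"
    using assms(1) by (simp add: gA_opposite_eq_gE spd_def)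
  show "gE \<theta>1 (-\<theta>1) S X Y = gA1 \<theta>1 S X Y"
    by (rule gE_opposite_eq_gA1[OF assms(1,3)])
qed

end
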